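(* Let $\nu=w\mu$ with $w$ a probability density w.r.t. $\mu$, and let $(x_1,\dots,x_n)\sim\nu^{\otimes n}$. Let $0<\delta<1$, $S_\delta=\{\lambda_{\min}(\mathbf G^w)\ge1-\delta\}$, and assume $\mathbb P(S_\delta)>0$ and $K_{w,m}:=\sup_{x\in\mathcal X}w(x)^{-1}\|\boldsymbol\varphi(x)\|_2^2<\infty$. Then for every $f\in L^2_\mu$, $$\mathbb E(\|\hat P_{V_m}f\|^2\mid S_\delta)\le\mathbb P(S_\delta)^{-1}(1-\delta)^{-1}\|f\|^2,$$ and $$\mathbb E(\|\hat P_{V_m}f\|^2\mid S_\delta)\le\mathbb P(S_\delta)^{-1}(1-\delta)^{-2}\Big(\|P_{V_m}f\|^2+\frac{K_{w,m}}{n}\|f\|^2\Big).$$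
   Context: $\mathcal X$ is a Polish space with Borel probability measure $\mu$; $\|\cdot\|$ is the $L^2_\mu(\mathcal X)$ norm. $V_m\subset L^2_\mu$ is an $m$-dimensional subspace with $L^2_\mu$-orthonormal basis $\varphi_1,\dots,\varphi_m$, $\boldsymbol\varphi(x)=(\varphi_1(x),\dots,\varphi_m(x))^T$, $P_{V_m}$ the $L^2_\mu$-orthogonal projection onto $V_m$. With weight $w$ and points $x_i$: $\|f\|_n^2=\frac1n\sum_iw(x_i)^{-1}f(x_i)^2$, $\mathbf G^w=\frac1n\sum_iw(x_i)^{-1}\boldsymbol\varphi(x_i)\boldsymbol\varphi(x_i)^T$, and $\hat P_{V_m}f$ (defined when $\mathbf G^w$ is invertible) is the unique minimizer over $g\in V_m$ of $\|f-g\|_n$. *)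

theory Defs
  imports "HOL-Probability.Probability"
begin

text \<open>Basis functions are indexed by a finite type 'm (so m = CARD('m)).
  Sample vectors are functions nat => 'a, the i-th sample point being x i, i < n.\<close>

definition L2norm_sq :: "'a measure \<Rightarrow> ('a \<Rightarrow> real) \<Rightarrow> real" where
  "L2norm_sq \<mu> g = (\<integral>y. (g y)\<^sup>2 \<partial>\<mu>)"

definition Vfun :: "('m::finite \<Rightarrow> 'a \<Rightarrow> real) \<Rightarrow> real^'m \<Rightarrow> 'a \<Rightarrow> real" where
  "Vfun \<phi> c = (\<lambda>y. \<Sum>j\<in>UNIV. c $ j * \<phi> j y)"

definition Pproj :: "'a measure \<Rightarrow> ('m::finite \<Rightarrow> 'a \<Rightarrow> real) \<Rightarrow> ('a \<Rightarrow> real) \<Rightarrow> 'a \<Rightarrow> real" where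
  "Pproj \<mu> \<phi> f = Vfun \<phi> (\<chi> j. \<integral>y. f y * \<phi> j y \<partial>\<mu>)"

definition emp_norm_sq :: "nat \<Rightarrow> ('a \<Rightarrow> real) \<Rightarrow> (nat \<Rightarrow> 'a) \<Rightarrow> ('a \<Rightarrow> real) \<Rightarrow> real" where
  "emp_norm_sq n w x g = (1 / real n) * (\<Sum>i<n. inverse (w (x i)) * (g (x i))\<^sup>2)"

definition Gw :: "nat \<Rightarrow> ('a \<Rightarrow> real) \<Rightarrow> ('m::finite \<Rightarrow> 'a \<Rightarrow> real) \<Rightarrow> (nat \<Rightarrow> 'a) \<Rightarrow> real^'m^'m" where
  "Gw n w \<phi> x = (\<chi> j k. (1 / real n) * (\<Sum>i<n. inverse (w (x i)) * \<phi> j (x i) * \<phi> k (x i)))"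

definition lambda_min :: "real^'m::finite^'m \<Rightarrow> real" where
  "lambda_min G = Inf {l. \<exists>v. v \<noteq> 0 \<and> G *v v = l *\<^sub>R v}"

text \<open>Weighted least-squares projection: the unique minimizer over V_m of ||f - g||_n
  (meaningful when G^w is invertible, where the minimizer is unique).\<close>
definition hatP :: "nat \<Rightarrow> ('a \<Rightarrow> real) \<Rightarrow> ('m::finite \<Rightarrow> 'a \<Rightarrow> real) \<Rightarrow> (nat \<Rightarrow> 'a)
    \<Rightarrow> ('a \<Rightarrow> real) \<Rightarrow> 'a \<Rightarrow> real" where
  "hatP n w \<phi> x f = Vfun \<phi> (THE c. \<forall>d. emp_norm_sq n w x (\<lambda>y. f y - Vfun \<phi> c y)
                                      \<le> emp_norm_sq n w x (\<lambda>y. f y - Vfun \<phi> d y))"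

text \<open>K_{w,m} = sup_x w(x)^{-1} ||phi(x)||_2^2, in ennreal (a/0 = top for a > 0).\<close>
definition Kwm :: "('a \<Rightarrow> real) \<Rightarrow> ('m::finite \<Rightarrow> 'a \<Rightarrow> real) \<Rightarrow> ennreal" where
  "Kwm w \<phi> = (SUP y. ennreal ((norm (\<chi> j. \<phi> j y))\<^sup>2) / ennreal (w y))"

definition S_delta :: "nat \<Rightarrow> ('a \<Rightarrow> real) \<Rightarrow> ('m::finite \<Rightarrow> 'a \<Rightarrow> real) \<Rightarrow> real
    \<Rightarrow> (nat \<Rightarrow> 'a) measure \<Rightarrow> (nat \<Rightarrow> 'a) set" where
  "S_delta n w \<phi> \<delta> P = {x \<in> space P. lambda_min (Gw n w \<phi> x) \<ge> 1 - \<delta>}"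

definition cond_exp_event :: "'b measure \<Rightarrow> ('b \<Rightarrow> real) \<Rightarrow> 'b set \<Rightarrow> ennreal" where
  "cond_exp_event P Y S = (\<integral>\<^sup>+ \<omega>. ennreal (Y \<omega>) * indicator S \<omega> \<partial>P) / emeasure P S"

end

theory Submission
  imports Defs
begin

text \<open>On the event S_delta the Gram matrix satisfies G^w \<ge> (1 - delta) I, so the
  normal equations G^w c = b (b the vector of empirical inner products of f with the basis)
  have a unique solution c, the coefficient vector of the weighted least-squares projection,
  and by orthonormality its L^2 norm is |c|^2. Coercivity gives
  (1 - delta) |c|^2 \<le> ||f||_n^2 (Pythagoras for the empirical seminorm) and
  (1 - delta) |c| \<le> |b| (Cauchy-Schwarz applied to c . G^w c = c . b). Both right-hand sides
  are nonnegative on the whole sample space, so the conditional expectation on S_delta is at most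
  P(S_delta)^-1 times their unconditional expectations: E ||f||_n^2 \<le> ||f||^2, and
  E |b|^2 = sum_j (E[Y_j^2]/n + (1 - 1/n) (E Y_j)^2) with Y_j = f phi_j / w, where
  E Y_j = <f, phi_j> and sum_j E[Y_j^2] \<le> K_{w,m} ||f||^2.\<close>

lemma linear_coeff_zero_if_quadratic_nonneg:
  fixes b r :: real
  assumes r: "r \<ge> 0" and nonneg: "\<And>t. 0 \<le> 2 * t * b + t\<^sup>2 * r"
  shows "b = 0"
proof -
  define t where "t = - b / (r + 1)"
  have tb: "t * (r + 1) = - b" using r unfolding t_def by simp
  have "0 \<le> (r + 1)\<^sup>2 * (2 * t * b + t\<^sup>2 * r)" using nonneg[of t] by simp
  also have "\<dots> = 2 * b * (t * (r + 1)) * (r + 1) + (t * (r + 1))\<^sup>2 * r"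
    by (simp add: power2_eq_square algebra_simps)
  also have "\<dots> = b\<^sup>2 * (- r - 2)" unfolding tb by (simp add: power2_eq_square algebra_simps)
  finally have "0 \<le> b\<^sup>2 * (- r - 2)" .
  with r have "b\<^sup>2 \<le> 0" by (simp add: zero_le_mult_iff)
  then show ?thesis by simp
qed

text \<open>Rayleigh's principle: a minimiser of the quadratic form on the unit sphere is an
  eigenvector, since the form minus its minimum is nonnegative and vanishes there, so its
  first variation in every direction is zero.\<close>
lemma lambda_min_le_quadratic_form:
  fixes A :: "real^'m::finite^'m"
  assumes sym: "transpose A = A"
  shows "lambda_min A * (x \<bullet> x) \<le> x \<bullet> (A *v x)"
proof -
  define q where "q x = x \<bullet> (A *v x)" for x :: "real^'m"
  have "continuous_on (sphere 0 1) q"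
    unfolding q_def by (intro continuous_intros linear_continuous_on matrix_vector_mul_bounded_linear)
  moreover have "sphere (0::real^'m) 1 \<noteq> {}" by simp
  ultimately obtain v where v: "v \<in> sphere 0 1" and v_min: "\<And>y. y \<in> sphere 0 1 \<Longrightarrow> q v \<le> q y"
    using continuous_attains_inf[OF compact_sphere] by blast
  define m where "m = q v"
  have q_scale: "q (c *\<^sub>R y) = c\<^sup>2 * q y" for c y
    unfolding q_def by (simp add: matrix_vector_mult_scaleR power2_eq_square algebra_simps)
  have m_le: "m * (y \<bullet> y) \<le> q y" for y
  proof (cases "y = 0")
    case False
    then have "m \<le> q (inverse (norm y) *\<^sub>R y)" unfolding m_def by (intro v_min) simp
    also have "\<dots> = q y / (y \<bullet> y)" using False
      by (simp add: q_scale power_inverse dot_square_norm divide_inverse mult.commute)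
    finally show ?thesis using False by (simp add: pos_le_divide_eq)
  qed (simp add: q_def)
  define r where "r y = q y - m * (y \<bullet> y)" for y
  have r_nonneg: "r y \<ge> 0" for y using m_le[of y] by (simp add: r_def)
  have r_v: "r v = 0" using v by (simp add: r_def m_def dot_square_norm)
  have r_expand: "r (v + t *\<^sub>R u) = r v + 2 * t * (u \<bullet> (A *v v) - m * (u \<bullet> v)) + t\<^sup>2 * r u"
    for t u
  proof -
    have "v \<bullet> (A *v u) = (v v* A) \<bullet> u" by (simp add: dot_lmul_matrix)
    also have "\<dots> = u \<bullet> (A *v v)"
      using transpose_matrix_vector[of A v] sym by (simp add: inner_commute)
    finally show ?thesis
      unfolding r_def q_def
      by (simp add: matrix_vector_right_distrib matrix_vector_mult_scaleR inner_add_left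
          inner_add_right inner_commute power2_eq_square algebra_simps)
  qed
  have "u \<bullet> (A *v v) - m * (u \<bullet> v) = 0" for u
  proof (rule linear_coeff_zero_if_quadratic_nonneg[OF r_nonneg])
    fix t
    show "0 \<le> 2 * t * (u \<bullet> (A *v v) - m * (u \<bullet> v)) + t\<^sup>2 * r u"
      using r_nonneg[of "v + t *\<^sub>R u"] r_expand[of t u] r_v by simp
  qed
  from this[of "A *v v - m *\<^sub>R v"]
  have "(A *v v - m *\<^sub>R v) \<bullet> (A *v v - m *\<^sub>R v) = 0"
    by (simp add: inner_diff_left inner_diff_right algebra_simps)
  then have eigen: "A *v v = m *\<^sub>R v" by simp
  have "bdd_below {l. \<exists>v. v \<noteq> 0 \<and> A *v v = l *\<^sub>R v}"
  proof (rule bdd_belowI[of _ m], clarify)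
    fix l and y :: "real^'m" assume "y \<noteq> 0" "A *v y = l *\<^sub>R y"
    with m_le[of y] show "m \<le> l" by (simp add: q_def)
  qed
  moreover have "v \<noteq> 0" using v by auto
  ultimately have "lambda_min A \<le> m"
    unfolding lambda_min_def using eigen by (intro cInf_lower) auto
  then have "lambda_min A * (x \<bullet> x) \<le> m * (x \<bullet> x)" by (simp add: mult_right_mono)
  also have "\<dots> \<le> q x" by (rule m_le)
  finally show ?thesis by (simp add: q_def)
qed

lemma sq_inner_le_if_inner_le:
  fixes b c :: "'a::real_inner"
  assumes "0 < \<alpha>" and le: "\<alpha> * (c \<bullet> c) \<le> c \<bullet> b"
  shows "\<alpha>\<^sup>2 * (c \<bullet> c) \<le> b \<bullet> b"
proof (cases "c = 0")
  case False
  then have pos: "c \<bullet> c > 0" by simp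
  have "(\<alpha> * (c \<bullet> c))\<^sup>2 \<le> (norm c * norm b)\<^sup>2"
    using le norm_cauchy_schwarz[of c b] \<open>0 < \<alpha>\<close> pos by (intro power_mono) auto
  then have "(c \<bullet> c) * (\<alpha>\<^sup>2 * (c \<bullet> c)) \<le> (c \<bullet> c) * (b \<bullet> b)"
    by (simp add: power_mult_distrib dot_square_norm power2_eq_square mult_ac)
  then show ?thesis using pos by simp
qed simp

definition sample_mean :: "nat \<Rightarrow> (nat \<Rightarrow> 'a) \<Rightarrow> ('a \<Rightarrow> real) \<Rightarrow> real" where
  "sample_mean n x g = (1 / real n) * (\<Sum>i<n. g (x i))"

definition emp_inner :: "nat \<Rightarrow> ('a \<Rightarrow> real) \<Rightarrow> (nat \<Rightarrow> 'a) \<Rightarrow> ('a \<Rightarrow> real) \<Rightarrow> ('a \<Rightarrow> real) \<Rightarrow> real"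
  where "emp_inner n w x g h = sample_mean n x (\<lambda>y. inverse (w y) * g y * h y)"

definition emp_coeffs :: "nat \<Rightarrow> ('a \<Rightarrow> real) \<Rightarrow> ('m::finite \<Rightarrow> 'a \<Rightarrow> real) \<Rightarrow> (nat \<Rightarrow> 'a)
    \<Rightarrow> ('a \<Rightarrow> real) \<Rightarrow> real^'m" where
  "emp_coeffs n w \<phi> x f = (\<chi> j. emp_inner n w x f (\<phi> j))"

lemma emp_norm_sq_eq_sample_mean:
  "emp_norm_sq n w x g = sample_mean n x (\<lambda>y. inverse (w y) * (g y)\<^sup>2)"
  unfolding emp_norm_sq_def sample_mean_def ..

lemma emp_norm_sq_eq_emp_inner: "emp_norm_sq n w x g = emp_inner n w x g g"
  unfolding emp_norm_sq_def emp_inner_def sample_mean_def by (simp add: power2_eq_square mult.assoc)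

lemma emp_norm_sq_nonneg:
  assumes "\<And>y. w y \<ge> 0"
  shows "emp_norm_sq n w x g \<ge> 0"
  unfolding emp_norm_sq_def using assms by (intro mult_nonneg_nonneg sum_nonneg) auto

lemma emp_inner_commute: "emp_inner n w x g h = emp_inner n w x h g"
  unfolding emp_inner_def by (simp add: mult_ac)

lemma emp_inner_diff_left:
  "emp_inner n w x (\<lambda>y. g y - g' y) h = emp_inner n w x g h - emp_inner n w x g' h"
  unfolding emp_inner_def sample_mean_def by (simp add: algebra_simps sum_subtractf)

lemma emp_inner_Vfun_left:
  "emp_inner n w x (Vfun \<phi> d) h = (\<Sum>j\<in>UNIV. d $ j * emp_inner n w x (\<phi> j) h)"
  unfolding emp_inner_def sample_mean_def Vfun_def
  by (simp add: sum_distrib_left sum_distrib_right mult_ac sum.swap[of _ UNIV "{..<n}"])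

lemma emp_norm_sq_add_orthogonal:
  assumes "emp_inner n w x g h = 0"
  shows "emp_norm_sq n w x (\<lambda>y. g y + h y) = emp_norm_sq n w x g + emp_norm_sq n w x h"
proof -
  have "emp_norm_sq n w x (\<lambda>y. g y + h y) =
      emp_norm_sq n w x g + 2 * emp_inner n w x g h + emp_norm_sq n w x h"
    unfolding emp_norm_sq_def emp_inner_def sample_mean_def
    by (simp add: power2_eq_square algebra_simps sum.distrib sum_distrib_left)
  with assms show ?thesis by simp
qed

lemma Vfun_diff: "Vfun \<phi> (c - d) y = Vfun \<phi> c y - Vfun \<phi> d y"
  by (simp add: Vfun_def algebra_simps sum_subtractf)

lemma Gw_mult_vec_nth: "(Gw n w \<phi> x *v c) $ j = emp_inner n w x (\<phi> j) (Vfun \<phi> c)"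
proof -
  have "(Gw n w \<phi> x *v c) $ j = (\<Sum>k\<in>UNIV. c $ k * emp_inner n w x (\<phi> k) (\<phi> j))"
    by (simp add: matrix_vector_mult_def Gw_def emp_inner_def sample_mean_def mult_ac)
  also have "\<dots> = emp_inner n w x (Vfun \<phi> c) (\<phi> j)"
    by (simp add: emp_inner_Vfun_left)
  finally show ?thesis by (simp add: emp_inner_commute)
qed

lemma inner_Gw_mult: "c \<bullet> (Gw n w \<phi> x *v c) = emp_norm_sq n w x (Vfun \<phi> c)"
  by (simp add: inner_vec_def Gw_mult_vec_nth emp_norm_sq_eq_emp_inner
      emp_inner_Vfun_left[of n w x \<phi> c])

lemma transpose_Gw: "transpose (Gw n w \<phi> x) = Gw n w \<phi> x"
  by (simp add: transpose_def Gw_def vec_eq_iff mult_ac)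

lemma emp_norm_sq_Vfun_ge_lambda_min:
  assumes "\<alpha> \<le> lambda_min (Gw n w \<phi> x)"
  shows "\<alpha> * (c \<bullet> c) \<le> emp_norm_sq n w x (Vfun \<phi> c)"
proof -
  have "\<alpha> * (c \<bullet> c) \<le> lambda_min (Gw n w \<phi> x) * (c \<bullet> c)"
    using assms by (intro mult_right_mono) auto
  also have "\<dots> \<le> c \<bullet> (Gw n w \<phi> x *v c)" by (rule lambda_min_le_quadratic_form[OF transpose_Gw])
  finally show ?thesis by (simp add: inner_Gw_mult)
qed

text \<open>A solution of the normal equations leaves a residual that is empirically orthogonal
  to V_m.\<close>
lemma emp_norm_sq_residual_pythagoras:
  assumes normal: "Gw n w \<phi> x *v c = emp_coeffs n w \<phi> x f"
  shows "emp_norm_sq n w x (\<lambda>y. f y - Vfun \<phi> d y) =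
    emp_norm_sq n w x (\<lambda>y. f y - Vfun \<phi> c y) + emp_norm_sq n w x (Vfun \<phi> (c - d))"
proof -
  have "emp_inner n w x (\<phi> j) (\<lambda>y. f y - Vfun \<phi> c y) = 0" for j
    using arg_cong[OF normal, of "\<lambda>v. v $ j"]
    by (simp add: emp_inner_commute[of n w x "\<phi> j"] emp_inner_diff_left Gw_mult_vec_nth
        emp_coeffs_def)
  then have "emp_inner n w x (\<lambda>y. f y - Vfun \<phi> c y) (Vfun \<phi> (c - d)) = 0"
    by (simp add: emp_inner_commute[of n w x _ "Vfun \<phi> (c - d)"] emp_inner_Vfun_left)
  moreover have "(\<lambda>y. f y - Vfun \<phi> d y) = (\<lambda>y. (f y - Vfun \<phi> c y) + Vfun \<phi> (c - d) y)"
    by (simp add: Vfun_diff)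
  ultimately show ?thesis by (simp add: emp_norm_sq_add_orthogonal)
qed

lemma normal_equations_solvable:
  assumes "0 < \<alpha>" and coercive: "\<And>c. \<alpha> * (c \<bullet> c) \<le> emp_norm_sq n w x (Vfun \<phi> c)"
  shows "\<exists>c. Gw n w \<phi> x *v c = emp_coeffs n w \<phi> x f"
proof -
  have inj: "inj ((*v) (Gw n w \<phi> x))"
  proof (rule injI)
    fix c d assume "Gw n w \<phi> x *v c = Gw n w \<phi> x *v d"
    then have "Gw n w \<phi> x *v (c - d) = 0" by (simp add: matrix_vector_mult_diff_distrib)
    then have "emp_norm_sq n w x (Vfun \<phi> (c - d)) = 0" by (metis inner_Gw_mult inner_zero_right)
    with coercive[of "c - d"] \<open>0 < \<alpha>\<close> have "(c - d) \<bullet> (c - d) \<le> 0" by (simp add: mult_le_0_iff)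
    then show "c = d" by (metis inner_eq_zero_iff inner_ge_zero order_antisym right_minus_eq)
  qed
  have "surj ((*v) (Gw n w \<phi> x))"
    using linear_injective_imp_surjective[OF matrix_vector_mul_linear inj] by simp
  then show ?thesis by (metis surjD)
qed

lemma hatP_eq_Vfun_if_normal_equations:
  assumes "0 < \<alpha>" and coercive: "\<And>c. \<alpha> * (c \<bullet> c) \<le> emp_norm_sq n w x (Vfun \<phi> c)"
    and normal: "Gw n w \<phi> x *v c = emp_coeffs n w \<phi> x f"
  shows "hatP n w \<phi> x f = Vfun \<phi> c"
proof -
  let ?res = "\<lambda>d. emp_norm_sq n w x (\<lambda>y. f y - Vfun \<phi> d y)"
  have excess: "?res d - ?res c \<ge> \<alpha> * ((c - d) \<bullet> (c - d))" for d
    using emp_norm_sq_residual_pythagoras[OF normal, of d] coercive[of "c - d"] by simp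
  have "(THE c. \<forall>d. ?res c \<le> ?res d) = c"
  proof (rule the_equality)
    show "\<forall>d. ?res c \<le> ?res d"
      using excess \<open>0 < \<alpha>\<close> by (smt (verit) inner_ge_zero mult_nonneg_nonneg)
  next
    fix c' assume "\<forall>d. ?res c' \<le> ?res d"
    then have "?res c' \<le> ?res c" by blast
    then have "\<alpha> * ((c - c') \<bullet> (c - c')) \<le> 0" using excess[of c'] by linarith
    with \<open>0 < \<alpha>\<close> have "(c - c') \<bullet> (c - c') \<le> 0" by (simp add: mult_le_0_iff)
    then show "c' = c" by (metis inner_eq_zero_iff inner_ge_zero order_antisym right_minus_eq)
  qed
  then show ?thesis unfolding hatP_def by simp
qed

lemma hatP_coeff_bounds:
  assumes w_nonneg: "\<And>y. w y \<ge> 0" and "0 < \<alpha>"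
    and coercive: "\<And>c. \<alpha> * (c \<bullet> c) \<le> emp_norm_sq n w x (Vfun \<phi> c)"
  obtains c where "hatP n w \<phi> x f = Vfun \<phi> c"
    and "\<alpha> * (c \<bullet> c) \<le> emp_norm_sq n w x f"
    and "\<alpha>\<^sup>2 * (c \<bullet> c) \<le> emp_coeffs n w \<phi> x f \<bullet> emp_coeffs n w \<phi> x f"
proof -
  obtain c where normal: "Gw n w \<phi> x *v c = emp_coeffs n w \<phi> x f"
    using normal_equations_solvable[OF \<open>0 < \<alpha>\<close> coercive] by blast
  have "emp_norm_sq n w x f =
      emp_norm_sq n w x (\<lambda>y. f y - Vfun \<phi> c y) + emp_norm_sq n w x (Vfun \<phi> c)"
    using emp_norm_sq_residual_pythagoras[OF normal, of 0] by (simp add: Vfun_def)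
  moreover have "emp_norm_sq n w x (\<lambda>y. f y - Vfun \<phi> c y) \<ge> 0"
    by (rule emp_norm_sq_nonneg[OF w_nonneg])
  ultimately have "\<alpha> * (c \<bullet> c) \<le> emp_norm_sq n w x f"
    using coercive[of c] by linarith
  moreover have "\<alpha> * (c \<bullet> c) \<le> c \<bullet> emp_coeffs n w \<phi> x f"
    using coercive[of c] by (simp flip: normal inner_Gw_mult)
  ultimately show ?thesis
    using that hatP_eq_Vfun_if_normal_equations[OF \<open>0 < \<alpha>\<close> coercive normal]
      sq_inner_le_if_inner_le[OF \<open>0 < \<alpha>\<close>] by blast
qed

lemma integrable_mult_if_square_integrable:
  fixes g h :: "'a \<Rightarrow> real"
  assumes [measurable]: "g \<in> borel_measurable M" "h \<in> borel_measurable M"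
    and "integrable M (\<lambda>y. (g y)\<^sup>2)" "integrable M (\<lambda>y. (h y)\<^sup>2)"
  shows "integrable M (\<lambda>y. g y * h y)"
proof (rule Bochner_Integration.integrable_bound[of _ "\<lambda>y. (g y)\<^sup>2 + (h y)\<^sup>2"])
  show "integrable M (\<lambda>y. (g y)\<^sup>2 + (h y)\<^sup>2)" using assms by simp
  have "\<bar>g y * h y\<bar> \<le> (g y)\<^sup>2 + (h y)\<^sup>2" for y
  proof -
    have "2 * \<bar>g y\<bar> * \<bar>h y\<bar> \<le> (g y)\<^sup>2 + (h y)\<^sup>2"
      using sum_squares_bound[of "\<bar>g y\<bar>" "\<bar>h y\<bar>"] by simp
    moreover have "0 \<le> \<bar>g y\<bar> * \<bar>h y\<bar>" by simp
    ultimately show ?thesis unfolding abs_mult by linarith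
  qed
  then show "AE y in M. norm (g y * h y) \<le> norm ((g y)\<^sup>2 + (h y)\<^sup>2)" by simp
qed simp

lemma
  fixes g :: "'a \<Rightarrow> real"
  assumes \<nu>: "prob_space \<nu>" and g: "integrable \<nu> g" and "i \<in> I"
  shows integrable_PiM_component: "integrable (PiM I (\<lambda>_. \<nu>)) (\<lambda>x. g (x i))"
    and integral_PiM_component: "(\<integral>x. g (x i) \<partial>PiM I (\<lambda>_. \<nu>)) = (\<integral>y. g y \<partial>\<nu>)"
proof -
  have distr: "distr (PiM I (\<lambda>_. \<nu>)) \<nu> (\<lambda>x. x i) = \<nu>"
    using distr_PiM_component[of I "\<lambda>_. \<nu>" i] \<nu> \<open>i \<in> I\<close> by simp
  have [measurable]: "(\<lambda>x. x i) \<in> measurable (PiM I (\<lambda>_. \<nu>)) \<nu>" "g \<in> borel_measurable \<nu>"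
    using \<open>i \<in> I\<close> g by auto
  show "integrable (PiM I (\<lambda>_. \<nu>)) (\<lambda>x. g (x i))"
    using g integrable_distr_eq[of "\<lambda>x. x i" "PiM I (\<lambda>_. \<nu>)" \<nu> g] by (simp add: distr)
  show "(\<integral>x. g (x i) \<partial>PiM I (\<lambda>_. \<nu>)) = (\<integral>y. g y \<partial>\<nu>)"
    using integral_distr[of "\<lambda>x. x i" "PiM I (\<lambda>_. \<nu>)" \<nu> g] by (simp add: distr)
qed

lemma
  fixes g h :: "'a \<Rightarrow> real"
  assumes \<nu>: "prob_space \<nu>" and g: "integrable \<nu> g" and h: "integrable \<nu> h"
    and I: "finite I" "i \<in> I" "k \<in> I" "i \<noteq> k"
  shows integrable_PiM_two_components: "integrable (PiM I (\<lambda>_. \<nu>)) (\<lambda>x. g (x i) * h (x k))"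
    and integral_PiM_two_components:
      "(\<integral>x. g (x i) * h (x k) \<partial>PiM I (\<lambda>_. \<nu>)) = (\<integral>y. g y \<partial>\<nu>) * (\<integral>y. h y \<partial>\<nu>)"
proof -
  interpret prob_space \<nu> by (rule \<nu>)
  interpret product_sigma_finite "\<lambda>_. \<nu>"
    by (simp add: product_sigma_finite_def sigma_finite_measure_axioms)
  define F where "F l = (if l = i then g else if l = k then h else (\<lambda>_. 1))" for l
  have F_int: "integrable \<nu> (F l)" for l using g h by (simp add: F_def)
  have prod_F: "(\<Prod>l\<in>I. G l) = G i * G k" if "\<And>l. l \<noteq> i \<Longrightarrow> l \<noteq> k \<Longrightarrow> G l = 1"
    for G :: "_ \<Rightarrow> real"
  proof -
    have "(\<Prod>l\<in>I. G l) = G i * (G k * (\<Prod>l\<in>I - {i} - {k}. G l))"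
      using I by (simp add: prod.remove)
    also have "(\<Prod>l\<in>I - {i} - {k}. G l) = 1" using that by (intro prod.neutral) auto
    finally show ?thesis by simp
  qed
  have eq: "(\<Prod>l\<in>I. F l (x l)) = g (x i) * h (x k)" for x
    using prod_F[of "\<lambda>l. F l (x l)"] I by (simp add: F_def)
  show "integrable (PiM I (\<lambda>_. \<nu>)) (\<lambda>x. g (x i) * h (x k))"
    using product_integrable_prod[of I F] I F_int by (simp add: eq)
  have "(\<integral>x. g (x i) * h (x k) \<partial>PiM I (\<lambda>_. \<nu>)) = (\<integral>x. (\<Prod>l\<in>I. F l (x l)) \<partial>PiM I (\<lambda>_. \<nu>))"
    by (simp only: eq)
  also have "\<dots> = (\<Prod>l\<in>I. integral\<^sup>L \<nu> (F l))"
    using I F_int by (intro product_integral_prod)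
  also have "\<dots> = integral\<^sup>L \<nu> (F i) * integral\<^sup>L \<nu> (F k)"
    by (rule prod_F) (simp add: F_def prob_space)
  finally show "(\<integral>x. g (x i) * h (x k) \<partial>PiM I (\<lambda>_. \<nu>)) = (\<integral>y. g y \<partial>\<nu>) * (\<integral>y. h y \<partial>\<nu>)"
    using I by (simp add: F_def)
qed

lemma
  fixes g :: "'a \<Rightarrow> real"
  assumes \<nu>: "prob_space \<nu>" and g: "integrable \<nu> g" and g_nonneg: "\<And>y. g y \<ge> 0"
  shows integrable_sample_mean: "integrable (PiM {..<n} (\<lambda>_. \<nu>)) (\<lambda>x. sample_mean n x g)"
    and integral_sample_mean_le: "(\<integral>x. sample_mean n x g \<partial>PiM {..<n} (\<lambda>_. \<nu>)) \<le> (\<integral>y. g y \<partial>\<nu>)"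
proof -
  show "integrable (PiM {..<n} (\<lambda>_. \<nu>)) (\<lambda>x. sample_mean n x g)"
    unfolding sample_mean_def
    by (intro integrable_mult_right Bochner_Integration.integrable_sum
        integrable_PiM_component[OF \<nu> g]) simp
  have "(\<integral>x. sample_mean n x g \<partial>PiM {..<n} (\<lambda>_. \<nu>)) = (1 / real n) * (real n * (\<integral>y. g y \<partial>\<nu>))"
    unfolding sample_mean_def
    by (simp add: integrable_PiM_component[OF \<nu> g] integral_PiM_component[OF \<nu> g])
  also have "\<dots> \<le> (\<integral>y. g y \<partial>\<nu>)"
    using Bochner_Integration.integral_nonneg[of \<nu> g] g_nonneg by (cases "n = 0") auto
  finally show "(\<integral>x. sample_mean n x g \<partial>PiM {..<n} (\<lambda>_. \<nu>)) \<le> (\<integral>y. g y \<partial>\<nu>)" .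
qed

text \<open>The second moment of a sample mean: the n diagonal terms contribute the second moment
  of g, the n^2 - n off-diagonal terms the square of its mean.\<close>
lemma
  fixes g :: "'a \<Rightarrow> real"
  assumes \<nu>: "prob_space \<nu>" and g: "integrable \<nu> g" and g2: "integrable \<nu> (\<lambda>y. (g y)\<^sup>2)"
  shows integrable_sample_mean_sq: "integrable (PiM {..<n} (\<lambda>_. \<nu>)) (\<lambda>x. (sample_mean n x g)\<^sup>2)"
    and integral_sample_mean_sq_le:
      "(\<integral>x. (sample_mean n x g)\<^sup>2 \<partial>PiM {..<n} (\<lambda>_. \<nu>)) \<le> (\<integral>y. (g y)\<^sup>2 \<partial>\<nu>) / real n + (\<integral>y. g y \<partial>\<nu>)\<^sup>2"
proof -
  let ?P = "PiM {..<n} (\<lambda>_. \<nu>)"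
  define T where "T i k x = g (x i) * g (x k)" for i k and x :: "nat \<Rightarrow> 'a"
  have T: "integrable ?P (T i k) \<and> (\<integral>x. T i k x \<partial>?P) =
      (if i = k then \<integral>y. (g y)\<^sup>2 \<partial>\<nu> else (\<integral>y. g y \<partial>\<nu>)\<^sup>2)" if "i < n" "k < n" for i k
  proof (cases "i = k")
    case True
    then have "T i k = (\<lambda>x. (g (x i))\<^sup>2)" by (simp add: T_def fun_eq_iff power2_eq_square)
    with True that show ?thesis
      using integrable_PiM_component[OF \<nu> g2, of k] integral_PiM_component[OF \<nu> g2, of k]
      by simp
  next
    case False
    with that show ?thesis unfolding T_def
      using integrable_PiM_two_components[OF \<nu> g g, of "{..<n}" i k]
        integral_PiM_two_components[OF \<nu> g g, of "{..<n}" i k]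
      by (simp add: power2_eq_square)
  qed
  have T_int: "integrable ?P (T i k)" if "i < n" "k < n" for i k
    using T[OF that] by blast
  have sq: "(sample_mean n x g)\<^sup>2 = (1 / real n)\<^sup>2 * (\<Sum>i<n. \<Sum>k<n. T i k x)" for x
    by (simp add: sample_mean_def T_def power2_eq_square sum_product)
  show "integrable ?P (\<lambda>x. (sample_mean n x g)\<^sup>2)"
    unfolding sq using T by (intro integrable_mult_right Bochner_Integration.integrable_sum) auto
  have "(\<integral>x. (\<Sum>i<n. \<Sum>k<n. T i k x) \<partial>?P) = (\<Sum>i<n. \<integral>x. (\<Sum>k<n. T i k x) \<partial>?P)"
    by (rule Bochner_Integration.integral_sum) (auto intro!: Bochner_Integration.integrable_sum T_int)
  also have "\<dots> = (\<Sum>i<n. \<Sum>k<n. \<integral>x. T i k x \<partial>?P)"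
    by (intro sum.cong refl Bochner_Integration.integral_sum T_int) auto
  finally have "(\<integral>x. (sample_mean n x g)\<^sup>2 \<partial>?P) = (1 / real n)\<^sup>2 * (\<Sum>i<n. \<Sum>k<n. \<integral>x. T i k x \<partial>?P)"
    by (simp add: sq)
  also have "\<dots> = (1 / real n)\<^sup>2 *
      (\<Sum>i<n. \<Sum>k<n. if i = k then \<integral>y. (g y)\<^sup>2 \<partial>\<nu> else (\<integral>y. g y \<partial>\<nu>)\<^sup>2)"
    using T by simp
  also have "\<dots> = (1 / real n)\<^sup>2 * (real n * (\<integral>y. (g y)\<^sup>2 \<partial>\<nu>) + (real n * real n - real n) * (\<integral>y. g y \<partial>\<nu>)\<^sup>2)"
  proof -
    have "card ({..<n} \<inter> - {i}) = n - 1" if "i < n" for i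
    proof -
      have "{..<n} \<inter> - {i} = {..<n} - {i}" by auto
      with that show ?thesis by simp
    qed
    then show ?thesis by (simp add: sum.If_cases of_nat_diff algebra_simps)
  qed
  also have "\<dots> \<le> (\<integral>y. (g y)\<^sup>2 \<partial>\<nu>) / real n + (\<integral>y. g y \<partial>\<nu>)\<^sup>2"
    by (cases "n = 0") (simp_all add: power2_eq_square field_simps)
  finally show "(\<integral>x. (sample_mean n x g)\<^sup>2 \<partial>?P) \<le> (\<integral>y. (g y)\<^sup>2 \<partial>\<nu>) / real n + (\<integral>y. g y \<partial>\<nu>)\<^sup>2" .
qed

lemma cond_exp_event_le:
  fixes H Z :: "'b \<Rightarrow> real"
  assumes "prob_space P" and "measure P S > 0" and "integrable P Z"
    and Z_nonneg: "\<And>x. x \<in> space P \<Longrightarrow> 0 \<le> Z x" and HZ: "\<And>x. x \<in> S \<Longrightarrow> H x \<le> C * Z x"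
    and "C \<ge> 0" and "(\<integral>x. Z x \<partial>P) \<le> B"
  shows "cond_exp_event P H S \<le> ennreal (inverse (measure P S) * C * B)"
proof -
  interpret prob_space P by fact
  have "(\<integral>\<^sup>+ x. ennreal (H x) * indicator S x \<partial>P) \<le> (\<integral>\<^sup>+ x. ennreal (C * Z x) \<partial>P)"
    by (intro nn_integral_mono) (auto intro: ennreal_leI HZ split: split_indicator)
  also have "\<dots> = ennreal (\<integral>x. C * Z x \<partial>P)"
    using assms by (intro nn_integral_eq_integral) auto
  also have "\<dots> \<le> ennreal (C * B)"
    using assms by (intro ennreal_leI) (simp add: mult_left_mono)
  finally have "cond_exp_event P H S \<le> ennreal (C * B) / ennreal (measure P S)"
    unfolding cond_exp_event_def emeasure_eq_measure by (rule divide_right_mono_ennreal)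
  also have "\<dots> = ennreal (C * B / measure P S)"
  proof (intro divide_ennreal)
    have "0 \<le> (\<integral>x. Z x \<partial>P)" by (rule Bochner_Integration.integral_nonneg) (rule Z_nonneg)
    with assms(6,7) show "0 \<le> C * B" by (intro mult_nonneg_nonneg) auto
  qed (use assms in simp)
  finally show ?thesis by (simp add: field_simps)
qed

lemma norm_basis_sq_div_weight_le_Kwm:
  "ennreal ((norm (\<chi> j. \<phi> j y))\<^sup>2) / ennreal (w y) \<le> Kwm w \<phi>"
  unfolding Kwm_def by (rule SUP_upper) simp

lemma sum_sq_basis_div_weight_le_Kwm:
  assumes "Kwm w \<phi> < \<top>" and "\<And>y. w y \<ge> 0"
  shows "inverse (w y) * (\<Sum>j\<in>UNIV. (\<phi> j y)\<^sup>2) \<le> enn2real (Kwm w \<phi>)"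
proof (cases "w y = 0")
  case False
  with assms(2) have "w y > 0" by (simp add: less_le)
  have "(norm (\<chi> j. \<phi> j y))\<^sup>2 = (\<Sum>j\<in>UNIV. (\<phi> j y)\<^sup>2)"
    by (simp only: power2_norm_eq_inner) (simp add: inner_vec_def power2_eq_square)
  moreover have "ennreal ((norm (\<chi> j. \<phi> j y))\<^sup>2 / w y) \<le> ennreal (enn2real (Kwm w \<phi>))"
    using norm_basis_sq_div_weight_le_Kwm[of \<phi> y w] \<open>w y > 0\<close> assms(1)
    by (simp add: divide_ennreal less_top)
  ultimately show ?thesis by (simp add: ennreal_le_iff divide_inverse mult.commute)
qed simp

text \<open>A finite K_{w,m} forces the basis functions to vanish where the weight does, because
  there the quotient defining K_{w,m} is a positive number divided by zero, i.e. infinite.\<close>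
lemma basis_vanishes_where_weight_vanishes:
  assumes "Kwm w \<phi> < \<top>" and "w y = 0"
  shows "\<phi> j y = 0"
proof (rule ccontr)
  assume "\<phi> j y \<noteq> 0"
  then have "(\<chi> j. \<phi> j y) \<noteq> 0" by (metis vec_lambda_beta zero_index)
  then have "ennreal ((norm (\<chi> j. \<phi> j y))\<^sup>2) / ennreal (w y) = \<top>"
    using \<open>w y = 0\<close> by (simp add: divide_ennreal_def ennreal_mult_top)
  with assms(1) norm_basis_sq_div_weight_le_Kwm[of \<phi> y w] show False by (simp add: top_unique)
qed

locale weighted_sampling =
  fixes \<mu> :: "'a measure" and w :: "'a \<Rightarrow> real"
  assumes w_meas [measurable]: "w \<in> borel_measurable \<mu>"
    and w_nonneg: "\<And>y. w y \<ge> 0"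
    and w_density: "(\<integral>\<^sup>+ y. ennreal (w y) \<partial>\<mu>) = 1"
begin

sublocale \<nu>: prob_space "density \<mu> w"
proof
  have "emeasure (density \<mu> w) (space (density \<mu> w)) = (\<integral>\<^sup>+ y. ennreal (w y) * indicator (space \<mu>) y \<partial>\<mu>)"
    by (simp add: emeasure_density)
  also have "\<dots> = (\<integral>\<^sup>+ y. ennreal (w y) \<partial>\<mu>)"
    by (intro nn_integral_cong) simp
  finally show "emeasure (density \<mu> w) (space (density \<mu> w)) = 1" by (simp add: w_density)
qed

lemma integral_density_weight:
  fixes g :: "'a \<Rightarrow> real"
  assumes "g \<in> borel_measurable \<mu>"
  shows "(\<integral>y. g y \<partial>density \<mu> w) = (\<integral>y. w y * g y \<partial>\<mu>)"
  using assms w_nonneg by (subst integral_density) auto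

lemma integrable_density_weight_iff:
  fixes g :: "'a \<Rightarrow> real"
  assumes "g \<in> borel_measurable \<mu>"
  shows "integrable (density \<mu> w) g \<longleftrightarrow> integrable \<mu> (\<lambda>y. w y * g y)"
  using assms w_nonneg by (subst integrable_density) auto

lemma
  fixes f :: "'a \<Rightarrow> real"
  assumes [measurable]: "f \<in> borel_measurable \<mu>" and f_L2: "integrable \<mu> (\<lambda>y. (f y)\<^sup>2)"
  shows integrable_weighted_sq: "integrable (density \<mu> w) (\<lambda>y. inverse (w y) * (f y)\<^sup>2)"
    and integral_weighted_sq_le: "(\<integral>y. inverse (w y) * (f y)\<^sup>2 \<partial>density \<mu> w) \<le> L2norm_sq \<mu> f"
proof -
  have le: "\<bar>w y * (inverse (w y) * (f y)\<^sup>2)\<bar> \<le> (f y)\<^sup>2" for y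
    by (cases "w y = 0") (simp_all add: w_nonneg flip: mult.assoc)
  have int: "integrable \<mu> (\<lambda>y. w y * (inverse (w y) * (f y)\<^sup>2))"
    by (rule Bochner_Integration.integrable_bound[OF f_L2]) (auto simp: le)
  then show "integrable (density \<mu> w) (\<lambda>y. inverse (w y) * (f y)\<^sup>2)"
    by (simp add: integrable_density_weight_iff)
  have "(\<integral>y. inverse (w y) * (f y)\<^sup>2 \<partial>density \<mu> w) = (\<integral>y. w y * (inverse (w y) * (f y)\<^sup>2) \<partial>\<mu>)"
    by (simp add: integral_density_weight)
  also have "\<dots> \<le> (\<integral>y. (f y)\<^sup>2 \<partial>\<mu>)"
    using int f_L2 le by (intro integral_mono) (auto simp: abs_le_iff)
  finally show "(\<integral>y. inverse (w y) * (f y)\<^sup>2 \<partial>density \<mu> w) \<le> L2norm_sq \<mu> f"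
    by (simp add: L2norm_sq_def)
qed

lemma
  fixes f :: "'a \<Rightarrow> real"
  assumes [measurable]: "f \<in> borel_measurable \<mu>" and f_L2: "integrable \<mu> (\<lambda>y. (f y)\<^sup>2)"
  shows integrable_emp_norm_sq:
      "integrable (PiM {..<n} (\<lambda>_. density \<mu> w)) (\<lambda>x. emp_norm_sq n w x f)"
    and integral_emp_norm_sq_le:
      "(\<integral>x. emp_norm_sq n w x f \<partial>PiM {..<n} (\<lambda>_. density \<mu> w)) \<le> L2norm_sq \<mu> f"
proof -
  note mean = integrable_weighted_sq[OF assms]
  show "integrable (PiM {..<n} (\<lambda>_. density \<mu> w)) (\<lambda>x. emp_norm_sq n w x f)"
    unfolding emp_norm_sq_eq_sample_mean
    using integrable_sample_mean[OF \<nu>.prob_space_axioms mean] w_nonneg by simp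
  have "(\<integral>x. emp_norm_sq n w x f \<partial>PiM {..<n} (\<lambda>_. density \<mu> w))
      \<le> (\<integral>y. inverse (w y) * (f y)\<^sup>2 \<partial>density \<mu> w)"
    unfolding emp_norm_sq_eq_sample_mean
    using integral_sample_mean_le[OF \<nu>.prob_space_axioms mean] w_nonneg by simp
  also have "\<dots> \<le> L2norm_sq \<mu> f" by (rule integral_weighted_sq_le[OF assms])
  finally show "(\<integral>x. emp_norm_sq n w x f \<partial>PiM {..<n} (\<lambda>_. density \<mu> w)) \<le> L2norm_sq \<mu> f" .
qed

end

locale weighted_orthonormal_sampling = weighted_sampling +
  fixes \<phi> :: "'m::finite \<Rightarrow> 'a \<Rightarrow> real"
  assumes phi_meas [measurable]: "\<And>j. \<phi> j \<in> borel_measurable \<mu>"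
    and phi_L2: "\<And>j. integrable \<mu> (\<lambda>y. (\<phi> j y)\<^sup>2)"
    and phi_orth: "\<And>j k. (\<integral>y. \<phi> j y * \<phi> k y \<partial>\<mu>) = (if j = k then 1 else 0)"
begin

lemma L2norm_sq_Vfun: "L2norm_sq \<mu> (Vfun \<phi> c) = c \<bullet> c"
proof -
  have int: "integrable \<mu> (\<lambda>y. \<phi> j y * \<phi> k y)" for j k
    by (rule integrable_mult_if_square_integrable) (simp_all add: phi_L2)
  have "(\<lambda>y. (Vfun \<phi> c y)\<^sup>2) = (\<lambda>y. \<Sum>j\<in>UNIV. \<Sum>k\<in>UNIV. c $ j * c $ k * (\<phi> j y * \<phi> k y))"
    by (simp add: Vfun_def power2_eq_square sum_product mult_ac)
  then have "L2norm_sq \<mu> (Vfun \<phi> c) = (\<Sum>j\<in>UNIV. \<Sum>k\<in>UNIV. c $ j * c $ k * (\<integral>y. \<phi> j y * \<phi> k y \<partial>\<mu>))"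
    unfolding L2norm_sq_def using int by (simp add: integrable_sum)
  also have "\<dots> = (\<Sum>j\<in>UNIV. c $ j * c $ j)"
    by (simp add: phi_orth if_distrib cong: if_cong)
  finally show ?thesis by (simp add: inner_vec_def)
qed

lemma L2norm_sq_Pproj: "L2norm_sq \<mu> (Pproj \<mu> \<phi> f) = (\<Sum>j\<in>UNIV. (\<integral>y. f y * \<phi> j y \<partial>\<mu>)\<^sup>2)"
  by (simp add: Pproj_def L2norm_sq_Vfun inner_vec_def power2_eq_square)

end

context weighted_orthonormal_sampling
begin

lemma L2norm_sq_hatP_le:
  assumes "0 < \<alpha>" and "\<alpha> \<le> lambda_min (Gw n w \<phi> x)"
  shows "L2norm_sq \<mu> (hatP n w \<phi> x f) \<le> inverse \<alpha> * emp_norm_sq n w x f"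
    and "L2norm_sq \<mu> (hatP n w \<phi> x f)
      \<le> inverse (\<alpha>\<^sup>2) * (emp_coeffs n w \<phi> x f \<bullet> emp_coeffs n w \<phi> x f)"
proof -
  obtain c where "hatP n w \<phi> x f = Vfun \<phi> c" and "\<alpha> * (c \<bullet> c) \<le> emp_norm_sq n w x f"
    and "\<alpha>\<^sup>2 * (c \<bullet> c) \<le> emp_coeffs n w \<phi> x f \<bullet> emp_coeffs n w \<phi> x f"
    using hatP_coeff_bounds[OF w_nonneg \<open>0 < \<alpha>\<close> emp_norm_sq_Vfun_ge_lambda_min[OF assms(2)]] .
  with \<open>0 < \<alpha>\<close> show "L2norm_sq \<mu> (hatP n w \<phi> x f) \<le> inverse \<alpha> * emp_norm_sq n w x f"
    and "L2norm_sq \<mu> (hatP n w \<phi> x f)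
      \<le> inverse (\<alpha>\<^sup>2) * (emp_coeffs n w \<phi> x f \<bullet> emp_coeffs n w \<phi> x f)"
    by (simp_all add: L2norm_sq_Vfun field_simps)
qed

context
  fixes f :: "'a \<Rightarrow> real"
  assumes K_finite: "Kwm w \<phi> < \<top>"
    and f_meas [measurable]: "f \<in> borel_measurable \<mu>"
    and f_L2: "integrable \<mu> (\<lambda>y. (f y)\<^sup>2)"
begin

lemma
  shows integrable_weighted_coeff: "integrable (density \<mu> w) (\<lambda>y. inverse (w y) * f y * \<phi> j y)"
    and integral_weighted_coeff:
      "(\<integral>y. inverse (w y) * f y * \<phi> j y \<partial>density \<mu> w) = (\<integral>y. f y * \<phi> j y \<partial>\<mu>)"
proof -
  have [measurable]: "(\<lambda>y. inverse (w y) * f y * \<phi> j y) \<in> borel_measurable \<mu>" by measurable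
  have "(\<lambda>y. w y * (inverse (w y) * f y * \<phi> j y)) = (\<lambda>y. f y * \<phi> j y)"
  proof
    fix y show "w y * (inverse (w y) * f y * \<phi> j y) = f y * \<phi> j y"
      using basis_vanishes_where_weight_vanishes[OF K_finite] by (cases "w y = 0") auto
  qed
  moreover have "integrable \<mu> (\<lambda>y. f y * \<phi> j y)"
    by (rule integrable_mult_if_square_integrable) (simp_all add: f_L2 phi_L2)
  ultimately show "integrable (density \<mu> w) (\<lambda>y. inverse (w y) * f y * \<phi> j y)"
    and "(\<integral>y. inverse (w y) * f y * \<phi> j y \<partial>density \<mu> w) = (\<integral>y. f y * \<phi> j y \<partial>\<mu>)"
    by (simp_all only: integrable_density_weight_iff integral_density_weight measurable)
qed

lemma
  shows integrable_weighted_coeff_sq: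
      "integrable (density \<mu> w) (\<lambda>y. (inverse (w y) * f y * \<phi> j y)\<^sup>2)"
    and sum_integral_weighted_coeff_sq_le:
      "(\<Sum>j\<in>UNIV. \<integral>y. (inverse (w y) * f y * \<phi> j y)\<^sup>2 \<partial>density \<mu> w)
        \<le> enn2real (Kwm w \<phi>) * L2norm_sq \<mu> f"
proof -
  define K where "K = enn2real (Kwm w \<phi>)"
  define q where "q j y = inverse (w y) * (\<phi> j y)\<^sup>2 * (f y)\<^sup>2" for j y
  have w_q: "w y * (inverse (w y) * f y * \<phi> j y)\<^sup>2 = q j y" for j y
    by (cases "w y = 0") (simp_all add: q_def power2_eq_square field_simps)
  have sum_q: "(\<Sum>j\<in>UNIV. q j y) = inverse (w y) * (\<Sum>j\<in>UNIV. (\<phi> j y)\<^sup>2) * (f y)\<^sup>2" for y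
    by (simp add: q_def sum_distrib_left sum_distrib_right)
  have sum_q_le: "(\<Sum>j\<in>UNIV. q j y) \<le> K * (f y)\<^sup>2" for y
    unfolding sum_q K_def
    by (intro mult_right_mono sum_sq_basis_div_weight_le_Kwm[OF K_finite w_nonneg]) simp
  have q_le: "\<bar>q j y\<bar> \<le> K * (f y)\<^sup>2" for j y
  proof -
    have "q j y \<le> (\<Sum>j\<in>UNIV. q j y)"
      using w_nonneg by (intro member_le_sum) (auto simp: q_def)
    moreover have "q j y \<ge> 0" using w_nonneg[of y] by (simp add: q_def)
    ultimately show ?thesis using sum_q_le[of y] by simp
  qed
  have q_int: "integrable \<mu> (q j)" for j
  proof (rule Bochner_Integration.integrable_bound[of _ "\<lambda>y. K * (f y)\<^sup>2"])
    show "integrable \<mu> (\<lambda>y. K * (f y)\<^sup>2)" using f_L2 by simp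
    show "q j \<in> borel_measurable \<mu>" unfolding q_def by measurable
    show "AE y in \<mu>. norm (q j y) \<le> norm (K * (f y)\<^sup>2)"
      using q_le by (intro AE_I2) (metis abs_ge_self order_trans real_norm_def)
  qed
  then show "integrable (density \<mu> w) (\<lambda>y. (inverse (w y) * f y * \<phi> j y)\<^sup>2)" for j
    by (simp add: integrable_density_weight_iff w_q)
  have "(\<Sum>j\<in>UNIV. \<integral>y. (inverse (w y) * f y * \<phi> j y)\<^sup>2 \<partial>density \<mu> w) = (\<integral>y. (\<Sum>j\<in>UNIV. q j y) \<partial>\<mu>)"
    using q_int by (simp add: integral_density_weight w_q)
  also have "\<dots> \<le> (\<integral>y. K * (f y)\<^sup>2 \<partial>\<mu>)"
    using q_int f_L2 sum_q_le by (intro integral_mono) auto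
  finally show "(\<Sum>j\<in>UNIV. \<integral>y. (inverse (w y) * f y * \<phi> j y)\<^sup>2 \<partial>density \<mu> w) \<le> K * L2norm_sq \<mu> f"
    by (simp add: L2norm_sq_def)
qed

lemma
  shows integrable_emp_coeffs_sq: "integrable (PiM {..<n} (\<lambda>_. density \<mu> w))
      (\<lambda>x. emp_coeffs n w \<phi> x f \<bullet> emp_coeffs n w \<phi> x f)"
    and integral_emp_coeffs_sq_le:
      "(\<integral>x. emp_coeffs n w \<phi> x f \<bullet> emp_coeffs n w \<phi> x f \<partial>PiM {..<n} (\<lambda>_. density \<mu> w))
        \<le> L2norm_sq \<mu> (Pproj \<mu> \<phi> f) + enn2real (Kwm w \<phi>) / real n * L2norm_sq \<mu> f"
proof -
  let ?P = "PiM {..<n} (\<lambda>_. density \<mu> w)"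
  let ?Y = "\<lambda>j y. inverse (w y) * f y * \<phi> j y"
  have eq: "emp_coeffs n w \<phi> x f \<bullet> emp_coeffs n w \<phi> x f = (\<Sum>j\<in>UNIV. (sample_mean n x (?Y j))\<^sup>2)" for x
    by (simp add: emp_coeffs_def emp_inner_def inner_vec_def power2_eq_square)
  note mean_sq = integrable_sample_mean_sq[OF \<nu>.prob_space_axioms integrable_weighted_coeff
      integrable_weighted_coeff_sq]
    integral_sample_mean_sq_le[OF \<nu>.prob_space_axioms integrable_weighted_coeff
      integrable_weighted_coeff_sq]
  show "integrable ?P (\<lambda>x. emp_coeffs n w \<phi> x f \<bullet> emp_coeffs n w \<phi> x f)"
    unfolding eq using mean_sq by simp
  have "(\<integral>x. emp_coeffs n w \<phi> x f \<bullet> emp_coeffs n w \<phi> x f \<partial>?P)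
      = (\<Sum>j\<in>UNIV. \<integral>x. (sample_mean n x (?Y j))\<^sup>2 \<partial>?P)"
    unfolding eq using mean_sq by (simp add: Bochner_Integration.integral_sum)
  also have "\<dots> \<le> (\<Sum>j\<in>UNIV. (\<integral>y. (?Y j y)\<^sup>2 \<partial>density \<mu> w) / real n + (\<integral>y. f y * \<phi> j y \<partial>\<mu>)\<^sup>2)"
    using mean_sq by (intro sum_mono) (simp add: integral_weighted_coeff)
  also have "\<dots> = (\<Sum>j\<in>UNIV. \<integral>y. (?Y j y)\<^sup>2 \<partial>density \<mu> w) / real n + L2norm_sq \<mu> (Pproj \<mu> \<phi> f)"
    by (simp add: sum.distrib sum_divide_distrib L2norm_sq_Pproj)
  also have "\<dots> \<le> enn2real (Kwm w \<phi>) * L2norm_sq \<mu> f / real n + L2norm_sq \<mu> (Pproj \<mu> \<phi> f)"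
    by (intro add_right_mono divide_right_mono sum_integral_weighted_coeff_sq_le) simp
  finally show "(\<integral>x. emp_coeffs n w \<phi> x f \<bullet> emp_coeffs n w \<phi> x f \<partial>?P)
      \<le> L2norm_sq \<mu> (Pproj \<mu> \<phi> f) + enn2real (Kwm w \<phi>) / real n * L2norm_sq \<mu> f"
    by simp
qed

end

end

theorem mainTheorem4:
  fixes \<mu> :: "'a::polish_space measure"
    and w :: "'a \<Rightarrow> real"
    and \<phi> :: "'m::finite \<Rightarrow> 'a \<Rightarrow> real"
    and n :: nat and \<delta> :: real
    and f :: "'a \<Rightarrow> real"
  assumes mu: "prob_space \<mu>" "sets \<mu> = sets borel"
    and phi_meas: "\<And>j. \<phi> j \<in> borel_measurable \<mu>"
    and phi_L2: "\<And>j. integrable \<mu> (\<lambda>y. (\<phi> j y)\<^sup>2)"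
    and phi_orth: "\<And>j k. (\<integral>y. \<phi> j y * \<phi> k y \<partial>\<mu>) = (if j = k then 1 else 0)"
    and w_meas: "w \<in> borel_measurable \<mu>"
    and w_nonneg: "\<And>y. w y \<ge> 0"
    and w_dens: "(\<integral>\<^sup>+ y. ennreal (w y) \<partial>\<mu>) = 1"
    and delta: "0 < \<delta>" "\<delta> < 1"
    and PS: "measure (PiM {..<n} (\<lambda>_. density \<mu> w)) (S_delta n w \<phi> \<delta> (PiM {..<n} (\<lambda>_. density \<mu> w))) > 0"
    and K_fin: "Kwm w \<phi> < \<top>"
    and f_meas: "f \<in> borel_measurable \<mu>"
    and f_L2: "integrable \<mu> (\<lambda>y. (f y)\<^sup>2)"
  shows
    "let P = PiM {..<n} (\<lambda>_. density \<mu> w); S = S_delta n w \<phi> \<delta> P;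
         E = cond_exp_event P (\<lambda>x. L2norm_sq \<mu> (hatP n w \<phi> x f)) S
     in E \<le> ennreal (inverse (measure P S) * inverse (1 - \<delta>) * L2norm_sq \<mu> f)
      \<and> E \<le> ennreal (inverse (measure P S) * inverse ((1 - \<delta>)\<^sup>2) *
                (L2norm_sq \<mu> (Pproj \<mu> \<phi> f) + enn2real (Kwm w \<phi>) / real n * L2norm_sq \<mu> f))"
proof -
  interpret weighted_orthonormal_sampling \<mu> w \<phi>
    using w_meas w_nonneg w_dens phi_meas phi_L2 phi_orth by unfold_locales
  define P where "P = PiM {..<n} (\<lambda>_. density \<mu> w)"
  define S where "S = S_delta n w \<phi> \<delta> P"
  have P: "prob_space P" unfolding P_def by (intro prob_space_PiM \<nu>.prob_space_axioms)
  have PS': "measure P S > 0" using PS by (simp add: P_def S_def)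
  have "0 < 1 - \<delta>" using delta by simp
  have lambda_min_ge: "1 - \<delta> \<le> lambda_min (Gw n w \<phi> x)" if "x \<in> S" for x
    using that by (simp add: S_def S_delta_def)
  have "cond_exp_event P (\<lambda>x. L2norm_sq \<mu> (hatP n w \<phi> x f)) S
      \<le> ennreal (inverse (measure P S) * inverse (1 - \<delta>) * L2norm_sq \<mu> f)"
    by (rule cond_exp_event_le[OF P PS' integrable_emp_norm_sq[OF f_meas f_L2, of n, folded P_def]
          emp_norm_sq_nonneg[of w, OF w_nonneg] L2norm_sq_hatP_le(1)[where f = f, OF \<open>0 < 1 - \<delta>\<close> lambda_min_ge]
          _ integral_emp_norm_sq_le[OF f_meas f_L2, of n, folded P_def]])
      (use delta in simp_all)
  moreover have "cond_exp_event P (\<lambda>x. L2norm_sq \<mu> (hatP n w \<phi> x f)) S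
      \<le> ennreal (inverse (measure P S) * inverse ((1 - \<delta>)\<^sup>2) *
        (L2norm_sq \<mu> (Pproj \<mu> \<phi> f) + enn2real (Kwm w \<phi>) / real n * L2norm_sq \<mu> f))"
    by (rule cond_exp_event_le[OF P PS' integrable_emp_coeffs_sq[OF K_fin f_meas f_L2, of n, folded P_def]
          inner_ge_zero L2norm_sq_hatP_le(2)[where f = f, OF \<open>0 < 1 - \<delta>\<close> lambda_min_ge]
          _ integral_emp_coeffs_sq_le[OF K_fin f_meas f_L2, of n, folded P_def]])
      simp_all
  ultimately show ?thesis unfolding Let_def P_def S_def by simp
qed

end
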